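(* Let $L,N,K$ be finite simplicial complexes, let $\varphi: L\to N$ and $\psi: N\to K$ be surjective simplicial finite-fibrations, and let $n\ge2$. Then $\mathrm{TC}_n(\psi\circ\varphi)\le\min\{\mathrm{TC}_n(\varphi),\mathrm{TC}_n(\psi)\}$.
   Context: Simplicial complexes are abstract and edge-path connected; $X^n$ is the $n$-fold categorical product (vertex set $\mathrm{VX}(X)^n$; a set of vertices is a simplex iff each coordinate projection is a simplex). Simplicial maps $f,g: X\to Y$ are contiguous if $f(\sigma)\cup g(\sigma)$ is a simplex for every simplex $\sigma$; $f\sim g$ if joined by a finite chain of contiguous simplicial maps. $\mathrm{SD}(\varphi_1,\dots,\varphi_m)$ for simplicial maps $X\to Y$ is the least $k\ge0$ such that $X$ is a union of subcomplexes $X_0,\dots,X_k$ with $\varphi_i|_{X_j}\sim\varphi_l|_{X_j}$ for all $i,l,j$. For a surjective simplicial finite-fibration $\phi: X\to Y$, $\mathrm{TC}_n(\phi)=\mathrm{SD}(\phi\circ p_1,\dots,\phi\circ p_n)$ where $p_i: X^n\to X$ are the projections. $I_m$ is the complex with vertices $0,\dots,m$ and edges $\{i,i+1\}$; $\phi: X\to Y$ is a simplicial finite-fibration if for every finite complex $M$, $m\ge1$, inclusion $i: M\times\{0\}\to M\times I_m$ and simplicial $g: M\times\{0\}\to X$, $G: M\times I_m\to Y$ with $\phi\circ g=G\circ i$, there is simplicial $\widetilde G: M\times I_m\to X$ with $\widetilde G\circ i=g$, $\phi\circ\widetilde G=G$. *)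

theory Defs
  imports Main
begin

definition vertices :: "'a set set \<Rightarrow> 'a set" where
  "vertices X = \<Union>X"

definition is_complex :: "'a set set \<Rightarrow> bool" where
  "is_complex X \<longleftrightarrow> (\<forall>\<sigma>\<in>X. finite \<sigma> \<and> \<sigma> \<noteq> {}) \<and>
     (\<forall>\<sigma>\<in>X. \<forall>\<tau>. \<tau> \<subseteq> \<sigma> \<and> \<tau> \<noteq> {} \<longrightarrow> \<tau> \<in> X)"

definition edge_path_connected :: "'a set set \<Rightarrow> bool" where
  "edge_path_connected X \<longleftrightarrow> vertices X \<noteq> {} \<and>
     (\<forall>u\<in>vertices X. \<forall>v\<in>vertices X. (u, v) \<in> {(x, y). {x, y} \<in> X}\<^sup>*)"

definition finite_complex :: "'a set set \<Rightarrow> bool" where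
  "finite_complex X \<longleftrightarrow> is_complex X \<and> finite (vertices X)"

definition simplicial_map :: "'a set set \<Rightarrow> 'b set set \<Rightarrow> ('a \<Rightarrow> 'b) \<Rightarrow> bool" where
  "simplicial_map X Y f \<longleftrightarrow> (\<forall>\<sigma>\<in>X. f ` \<sigma> \<in> Y)"

definition contiguous :: "'a set set \<Rightarrow> 'b set set \<Rightarrow> ('a \<Rightarrow> 'b) \<Rightarrow> ('a \<Rightarrow> 'b) \<Rightarrow> bool" where
  "contiguous X Y f g \<longleftrightarrow> (\<forall>\<sigma>\<in>X. f ` \<sigma> \<union> g ` \<sigma> \<in> Y)"

text \<open>Contiguity class: joined by a finite chain of contiguous simplicial maps
  (maps are only compared on vertices).\<close>
definition same_contiguity_class ::
  "'a set set \<Rightarrow> 'b set set \<Rightarrow> ('a \<Rightarrow> 'b) \<Rightarrow> ('a \<Rightarrow> 'b) \<Rightarrow> bool" where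
  "same_contiguity_class X Y f g \<longleftrightarrow>
     (\<exists>(h :: nat \<Rightarrow> 'a \<Rightarrow> 'b) k.
        (\<forall>i\<le>k. simplicial_map X Y (h i)) \<and>
        (\<forall>v\<in>vertices X. h 0 v = f v \<and> h k v = g v) \<and>
        (\<forall>i<k. contiguous X Y (h i) (h (Suc i))))"

definition subcomplex :: "'a set set \<Rightarrow> 'a set set \<Rightarrow> bool" where
  "subcomplex A X \<longleftrightarrow> is_complex A \<and> A \<subseteq> X"

definition SD :: "'a set set \<Rightarrow> 'b set set \<Rightarrow> 'i set \<Rightarrow> ('i \<Rightarrow> 'a \<Rightarrow> 'b) \<Rightarrow> nat" where
  "SD X Y I \<phi> = (LEAST k. \<exists>A :: nat \<Rightarrow> 'a set set.
      (\<forall>j\<le>k. subcomplex (A j) X) \<and> (\<Union>j\<le>k. A j) = X \<and>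
      (\<forall>i\<in>I. \<forall>l\<in>I. \<forall>j\<le>k. same_contiguity_class (A j) Y (\<phi> i) (\<phi> l)))"

text \<open>n-fold categorical product; vertices are lists of length n.\<close>
definition cpow :: "'a set set \<Rightarrow> nat \<Rightarrow> 'a list set set" where
  "cpow X n = {S. S \<noteq> {} \<and> (\<forall>v\<in>S. length v = n) \<and> (\<forall>i<n. (\<lambda>v. v ! i) ` S \<in> X)}"

definition cprod :: "'a set set \<Rightarrow> 'b set set \<Rightarrow> ('a \<times> 'b) set set" where
  "cprod M P = {S. S \<noteq> {} \<and> fst ` S \<in> M \<and> snd ` S \<in> P}"

definition interval_complex :: "nat \<Rightarrow> nat set set" where
  "interval_complex m = {{i} | i. i \<le> m} \<union> {{i, Suc i} | i. i < m}"

text \<open>Simplicial finite-fibration; test complexes M are taken with vertices in nat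
  (every finite complex is isomorphic to one of these).\<close>
definition finite_fibration :: "'a set set \<Rightarrow> 'b set set \<Rightarrow> ('a \<Rightarrow> 'b) \<Rightarrow> bool" where
  "finite_fibration X Y \<phi> \<longleftrightarrow> simplicial_map X Y \<phi> \<and>
    (\<forall>(M :: nat set set) m (g :: nat \<times> nat \<Rightarrow> 'a) (G :: nat \<times> nat \<Rightarrow> 'b).
       finite_complex M \<and> m \<ge> 1 \<and>
       simplicial_map (cprod M {{0}}) X g \<and>
       simplicial_map (cprod M (interval_complex m)) Y G \<and>
       (\<forall>v\<in>vertices (cprod M {{0}}). \<phi> (g v) = G v) \<longrightarrow>
       (\<exists>Gt :: nat \<times> nat \<Rightarrow> 'a.
          simplicial_map (cprod M (interval_complex m)) X Gt \<and>
          (\<forall>v\<in>vertices (cprod M {{0}}). Gt v = g v) \<and>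
          (\<forall>v\<in>vertices (cprod M (interval_complex m)). \<phi> (Gt v) = G v)))"

definition TC :: "nat \<Rightarrow> 'a set set \<Rightarrow> 'b set set \<Rightarrow> ('a \<Rightarrow> 'b) \<Rightarrow> nat" where
  "TC n X Y \<phi> = SD (cpow X n) Y {..<n} (\<lambda>i v. \<phi> (v ! i))"

end

theory Submission
  imports Defs
begin

text \<open>Both inequalities hold for arbitrary simplicial maps between finite complexes with
  connected targets.
  Post-composing with \<psi> preserves contiguity, so a cover of \<open>L\<^sup>n\<close> witnessing
  \<open>TC\<^sub>n(\<phi>)\<close> also witnesses a bound for \<open>\<psi> \<circ> \<phi>\<close>. Pulling back a cover of \<open>N\<^sup>n\<close>
  witnessing \<open>TC\<^sub>n(\<psi>)\<close> along the simplicial map \<open>\<phi>\<^sup>n : L\<^sup>n \<rightarrow> N\<^sup>n\<close> gives a cover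
  of \<open>L\<^sup>n\<close> of the same size for \<open>\<psi> \<circ> \<phi>\<close>. The only subtle point is that the minimum
  defining SD is attained: a finite complex is covered by the face complexes of its simplices,
  and on a single simplex any two simplicial maps into a connected complex are in the same
  contiguity class.\<close>

lemma complex_simplex_finite: "is_complex X \<Longrightarrow> \<sigma> \<in> X \<Longrightarrow> finite \<sigma>"
  and complex_simplex_nonempty: "is_complex X \<Longrightarrow> \<sigma> \<in> X \<Longrightarrow> \<sigma> \<noteq> {}"
  and complex_face: "is_complex X \<Longrightarrow> \<sigma> \<in> X \<Longrightarrow> \<tau> \<subseteq> \<sigma> \<Longrightarrow> \<tau> \<noteq> {} \<Longrightarrow> \<tau> \<in> X"
  unfolding is_complex_def by blast+

lemma simplex_subset_vertices: "\<sigma> \<in> X \<Longrightarrow> \<sigma> \<subseteq> vertices X"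
  unfolding vertices_def by blast

lemma vertices_mono: "A \<subseteq> X \<Longrightarrow> vertices A \<subseteq> vertices X"
  unfolding vertices_def by blast

lemma finite_complex_finite: "finite_complex X \<Longrightarrow> finite X"
  unfolding finite_complex_def vertices_def by (auto intro: finite_UnionD)

lemma singleton_in_complex: "is_complex X \<Longrightarrow> a \<in> vertices X \<Longrightarrow> {a} \<in> X"
  unfolding vertices_def by (auto intro: complex_face)

lemma simplicial_map_const:
  "is_complex X \<Longrightarrow> is_complex Y \<Longrightarrow> a \<in> vertices Y \<Longrightarrow> simplicial_map X Y (\<lambda>_. a)"
  by (auto simp: simplicial_map_def image_constant_conv dest: complex_simplex_nonempty
      intro: singleton_in_complex)

lemma simplicial_map_comp:
  "simplicial_map X Y f \<Longrightarrow> simplicial_map Y Z g \<Longrightarrow> simplicial_map X Z (\<lambda>v. g (f v))"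
  unfolding simplicial_map_def by (metis image_image)

section \<open>Contiguity classes\<close>

lemma same_contiguity_class_cong:
  assumes "same_contiguity_class X Y f g"
    and "\<forall>v\<in>vertices X. f v = f' v" "\<forall>v\<in>vertices X. g v = g' v"
  shows "same_contiguity_class X Y f' g'"
  using assms unfolding same_contiguity_class_def by metis

lemma contiguous_cong:
  assumes "contiguous X Y f g" "\<forall>v\<in>vertices X. f v = f' v"
  shows "contiguous X Y f' g"
  unfolding contiguous_def
proof
  fix \<sigma> assume "\<sigma> \<in> X"
  moreover have "f' ` \<sigma> = f ` \<sigma>"
    using assms(2) simplex_subset_vertices[OF \<open>\<sigma> \<in> X\<close>] by (intro image_cong) auto
  ultimately show "f' ` \<sigma> \<union> g ` \<sigma> \<in> Y" using assms(1) by (simp add: contiguous_def)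
qed

lemma contiguous_imp_same_contiguity_class:
  assumes "simplicial_map X Y f" "simplicial_map X Y g" "contiguous X Y f g"
  shows "same_contiguity_class X Y f g"
  unfolding same_contiguity_class_def
  by (rule exI[of _ "\<lambda>i. if i = 0 then f else g"], rule exI[of _ 1])
     (use assms in \<open>simp add: le_Suc_eq\<close>)

lemma same_contiguity_class_refl:
  "simplicial_map X Y f \<Longrightarrow> same_contiguity_class X Y f f"
  unfolding same_contiguity_class_def by (intro exI[of _ "\<lambda>_. f"] exI[of _ 0]) simp

lemma same_contiguity_class_empty: "same_contiguity_class {} Y f g"
  unfolding same_contiguity_class_def
  by (intro exI[of _ "\<lambda>_. f"] exI[of _ 0]) (auto simp: simplicial_map_def vertices_def)

lemma same_contiguity_class_sym:
  assumes "same_contiguity_class X Y f g"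
  shows "same_contiguity_class X Y g f"
proof -
  obtain h k where h: "\<forall>i\<le>k. simplicial_map X Y (h i)"
    "\<forall>v\<in>vertices X. h 0 v = f v \<and> h k v = g v"
    "\<forall>i<k. contiguous X Y (h i) (h (Suc i))"
    using assms unfolding same_contiguity_class_def by blast
  have "contiguous X Y (h (k - i)) (h (k - Suc i))" if "i < k" for i
  proof -
    have "contiguous X Y (h (k - Suc i)) (h (Suc (k - Suc i)))"
      using h(3) that by simp
    moreover have "Suc (k - Suc i) = k - i" using that by simp
    ultimately show ?thesis by (simp add: contiguous_def Un_commute)
  qed
  with h(1,2) show ?thesis
    unfolding same_contiguity_class_def by (intro exI[of _ "\<lambda>i. h (k - i)"] exI[of _ k]) auto
qed

lemma same_contiguity_class_trans:
  assumes "same_contiguity_class X Y f g" "same_contiguity_class X Y g h"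
  shows "same_contiguity_class X Y f h"
proof -
  obtain h1 k1 where h1: "\<forall>i\<le>k1. simplicial_map X Y (h1 i)"
    "\<forall>v\<in>vertices X. h1 0 v = f v \<and> h1 k1 v = g v"
    "\<forall>i<k1. contiguous X Y (h1 i) (h1 (Suc i))"
    using assms(1) unfolding same_contiguity_class_def by blast
  obtain h2 k2 where h2: "\<forall>i\<le>k2. simplicial_map X Y (h2 i)"
    "\<forall>v\<in>vertices X. h2 0 v = g v \<and> h2 k2 v = h v"
    "\<forall>i<k2. contiguous X Y (h2 i) (h2 (Suc i))"
    using assms(2) unfolding same_contiguity_class_def by blast
  define c where "c i = (if i \<le> k1 then h1 i else h2 (i - k1))" for i
  have "contiguous X Y (c i) (c (Suc i))" if i: "i < k1 + k2" for i
  proof (cases "i < k1")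
    case True
    then show ?thesis using h1(3) by (simp add: c_def)
  next
    case False
    then have "contiguous X Y (h2 (i - k1)) (h2 (Suc i - k1))"
      using h2(3) i by (simp add: Suc_diff_le)
    moreover have "\<forall>v\<in>vertices X. h2 (i - k1) v = c i v"
      using False h1(2) h2(2) by (simp add: c_def)
    ultimately show ?thesis
      using False by (auto simp: c_def intro: contiguous_cong)
  qed
  moreover have "\<forall>i\<le>k1 + k2. simplicial_map X Y (c i)"
    using h1(1) h2(1) by (simp add: c_def)
  moreover have "\<forall>v\<in>vertices X. c 0 v = f v \<and> c (k1 + k2) v = h v"
    using h1(2) h2(2) by (auto simp: c_def)
  ultimately show ?thesis
    unfolding same_contiguity_class_def by blast
qed

lemma same_contiguity_class_comp_left:
  assumes "simplicial_map Y Z \<psi>" "same_contiguity_class X Y f g"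
  shows "same_contiguity_class X Z (\<lambda>v. \<psi> (f v)) (\<lambda>v. \<psi> (g v))"
proof -
  obtain h k where h: "\<forall>i\<le>k. simplicial_map X Y (h i)"
    "\<forall>v\<in>vertices X. h 0 v = f v \<and> h k v = g v"
    "\<forall>i<k. contiguous X Y (h i) (h (Suc i))"
    using assms(2) unfolding same_contiguity_class_def by blast
  have "\<forall>i\<le>k. simplicial_map X Z (\<lambda>v. \<psi> (h i v))"
    using h(1) assms(1) by (blast intro: simplicial_map_comp)
  moreover have "\<forall>i<k. contiguous X Z (\<lambda>v. \<psi> (h i v)) (\<lambda>v. \<psi> (h (Suc i) v))"
    using h(3) assms(1) by (simp add: contiguous_def simplicial_map_def flip: image_image image_Un)
  ultimately show ?thesis using h(2) unfolding same_contiguity_class_def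
    by (intro exI[of _ "\<lambda>i v. \<psi> (h i v)"] exI[of _ k]) auto
qed

lemma same_contiguity_class_comp_right:
  assumes F: "simplicial_map X Y F" and "same_contiguity_class Y Z f g"
  shows "same_contiguity_class X Z (\<lambda>v. f (F v)) (\<lambda>v. g (F v))"
proof -
  obtain h k where h: "\<forall>i\<le>k. simplicial_map Y Z (h i)"
    "\<forall>v\<in>vertices Y. h 0 v = f v \<and> h k v = g v"
    "\<forall>i<k. contiguous Y Z (h i) (h (Suc i))"
    using assms(2) unfolding same_contiguity_class_def by blast
  have "F v \<in> vertices Y" if "v \<in> vertices X" for v
    using that F by (auto simp: vertices_def simplicial_map_def)
  with h(2) have "\<forall>v\<in>vertices X. h 0 (F v) = f (F v) \<and> h k (F v) = g (F v)"
    by blast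
  moreover have "\<forall>i\<le>k. simplicial_map X Z (\<lambda>v. h i (F v))"
    using h(1) F by (blast intro: simplicial_map_comp)
  moreover have "\<forall>i<k. contiguous X Z (\<lambda>v. h i (F v)) (\<lambda>v. h (Suc i) (F v))"
    using h(3) F by (simp add: contiguous_def simplicial_map_def flip: image_image)
  ultimately show ?thesis unfolding same_contiguity_class_def
    by (intro exI[of _ "\<lambda>i v. h i (F v)"] exI[of _ k]) auto
qed

lemma same_contiguity_class_const_path:
  assumes X: "is_complex X" and Y: "is_complex Y"
    and a: "a \<in> vertices Y" and path: "(a, b) \<in> {(x, y). {x, y} \<in> Y}\<^sup>*"
  shows "same_contiguity_class X Y (\<lambda>_. a) (\<lambda>_. b)"
  using path
proof (induction rule: rtrancl_induct)
  case base
  show ?case by (rule same_contiguity_class_refl[OF simplicial_map_const[OF X Y a]])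
next
  case (step y z)
  then have yz: "{y, z} \<in> Y" by simp
  then have "y \<in> vertices Y" "z \<in> vertices Y" by (auto simp: vertices_def)
  moreover have "contiguous X Y (\<lambda>_. y) (\<lambda>_. z)"
    using yz complex_simplex_nonempty[OF X]
    by (auto simp: contiguous_def image_constant_conv insert_commute)
  ultimately have "same_contiguity_class X Y (\<lambda>_. y) (\<lambda>_. z)"
    by (intro contiguous_imp_same_contiguity_class simplicial_map_const X Y)
  with step.IH show ?case by (rule same_contiguity_class_trans)
qed

definition faces :: "'a set \<Rightarrow> 'a set set" where
  "faces \<sigma> = {\<tau>. \<tau> \<subseteq> \<sigma> \<and> \<tau> \<noteq> {}}"

lemma is_complex_faces: "finite \<sigma> \<Longrightarrow> is_complex (faces \<sigma>)"
  unfolding is_complex_def faces_def by (auto intro: finite_subset)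

lemma subcomplex_faces: "is_complex X \<Longrightarrow> \<sigma> \<in> X \<Longrightarrow> subcomplex (faces \<sigma>) X"
  unfolding subcomplex_def
  by (auto simp: faces_def intro: complex_face is_complex_faces[unfolded faces_def]
      complex_simplex_finite)

lemma simplicial_map_faces:
  "is_complex Y \<Longrightarrow> f ` \<sigma> \<in> Y \<Longrightarrow> simplicial_map (faces \<sigma>) Y f"
  unfolding simplicial_map_def faces_def by (auto intro: complex_face)

lemma same_contiguity_class_faces_const:
  assumes Y: "is_complex Y" and f: "f ` \<sigma> \<in> Y" and v: "v \<in> \<sigma>" and \<sigma>: "finite \<sigma>"
  shows "same_contiguity_class (faces \<sigma>) Y f (\<lambda>_. f v)"
proof (rule contiguous_imp_same_contiguity_class)
  show "simplicial_map (faces \<sigma>) Y f" using Y f by (rule simplicial_map_faces)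
  show "simplicial_map (faces \<sigma>) Y (\<lambda>_. f v)"
    using f v by (intro simplicial_map_const is_complex_faces \<sigma> Y) (auto simp: vertices_def)
  show "contiguous (faces \<sigma>) Y f (\<lambda>_. f v)"
    using v by (auto simp: contiguous_def faces_def image_constant_conv intro!: complex_face[OF Y f])
qed

text \<open>Both maps are contiguous to constant maps, and constant maps are linked along an edge
  path.\<close>
lemma same_contiguity_class_faces:
  assumes Y: "is_complex Y" "edge_path_connected Y"
    and f: "f ` \<sigma> \<in> Y" and g: "g ` \<sigma> \<in> Y" and \<sigma>: "finite \<sigma>" "\<sigma> \<noteq> {}"
  shows "same_contiguity_class (faces \<sigma>) Y f g"
proof -
  obtain v where v: "v \<in> \<sigma>" using \<sigma>(2) by blast
  have fv: "f v \<in> vertices Y" and gv: "g v \<in> vertices Y"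
    using f g v by (auto simp: vertices_def)
  then have "(f v, g v) \<in> {(x, y). {x, y} \<in> Y}\<^sup>*"
    using Y(2) by (simp add: edge_path_connected_def)
  then have "same_contiguity_class (faces \<sigma>) Y (\<lambda>_. f v) (\<lambda>_. g v)"
    by (rule same_contiguity_class_const_path[OF is_complex_faces[OF \<sigma>(1)] Y(1) fv])
  then show ?thesis
    using same_contiguity_class_faces_const[OF Y(1) f v \<sigma>(1)]
      same_contiguity_class_faces_const[OF Y(1) g v \<sigma>(1)]
    by (blast intro: same_contiguity_class_trans same_contiguity_class_sym)
qed

section \<open>Simplicial distance\<close>

definition SD_cover ::
  "'a set set \<Rightarrow> 'b set set \<Rightarrow> 'i set \<Rightarrow> ('i \<Rightarrow> 'a \<Rightarrow> 'b) \<Rightarrow> nat \<Rightarrow> (nat \<Rightarrow> 'a set set) \<Rightarrow> bool"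
  where "SD_cover X Y I \<phi> k A \<longleftrightarrow> (\<forall>j\<le>k. subcomplex (A j) X) \<and> (\<Union>j\<le>k. A j) = X \<and>
    (\<forall>i\<in>I. \<forall>l\<in>I. \<forall>j\<le>k. same_contiguity_class (A j) Y (\<phi> i) (\<phi> l))"

lemma SD_eq_Least: "SD X Y I \<phi> = (LEAST k. \<exists>A. SD_cover X Y I \<phi> k A)"
  unfolding SD_def SD_cover_def ..

lemma SD_le: "SD_cover X Y I \<phi> k A \<Longrightarrow> SD X Y I \<phi> \<le> k"
  unfolding SD_eq_Least by (blast intro: Least_le)

lemma SD_cover_SD: "SD_cover X Y I \<phi> k A \<Longrightarrow> \<exists>B. SD_cover X Y I \<phi> (SD X Y I \<phi>) B"
  unfolding SD_eq_Least by (rule LeastI_ex) blast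

lemma SD_cover_cong:
  assumes "SD_cover X Y I \<phi> k A" "\<forall>i\<in>I. \<forall>v\<in>vertices X. \<phi> i v = \<phi>' i v"
  shows "SD_cover X Y I \<phi>' k A"
proof -
  have "vertices (A j) \<subseteq> vertices X" if "j \<le> k" for j
    using assms(1) that by (intro vertices_mono) (auto simp: SD_cover_def subcomplex_def)
  with assms show ?thesis
    unfolding SD_cover_def by (blast intro: same_contiguity_class_cong)
qed

lemma SD_cong:
  assumes "\<forall>i\<in>I. \<forall>v\<in>vertices X. \<phi> i v = \<phi>' i v"
  shows "SD X Y I \<phi> = SD X Y I \<phi>'"
proof -
  have "\<forall>i\<in>I. \<forall>v\<in>vertices X. \<phi>' i v = \<phi> i v" using assms by simp
  then have "(\<exists>A. SD_cover X Y I \<phi> k A) \<longleftrightarrow> (\<exists>A. SD_cover X Y I \<phi>' k A)" for k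
    using assms SD_cover_cong by blast
  then show ?thesis unfolding SD_eq_Least by simp
qed

lemma SD_cover_exists:
  assumes X: "finite_complex X" and Y: "is_complex Y" "edge_path_connected Y"
    and \<phi>: "\<forall>i\<in>I. simplicial_map X Y (\<phi> i)"
  shows "\<exists>k A. SD_cover X Y I \<phi> k A"
proof -
  have Xc: "is_complex X" using X by (simp add: finite_complex_def)
  obtain xs where xs: "set xs = X" using finite_list[OF finite_complex_finite[OF X]] by blast
  define A where "A j = (if j < length xs then faces (xs ! j) else {})" for j
  have sub: "subcomplex (A j) X" for j
  proof (cases "j < length xs")
    case True
    then have "xs ! j \<in> X" using xs by auto
    with True show ?thesis by (simp add: A_def subcomplex_faces[OF Xc])
  qed (simp add: A_def subcomplex_def is_complex_def)
  have "X \<subseteq> (\<Union>j\<le>length xs. A j)"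
  proof
    fix \<sigma> assume "\<sigma> \<in> X"
    then obtain j where "j < length xs" "xs ! j = \<sigma>" using xs by (auto simp: in_set_conv_nth)
    with complex_simplex_nonempty[OF Xc \<open>\<sigma> \<in> X\<close>] show "\<sigma> \<in> (\<Union>j\<le>length xs. A j)"
      by (auto simp: A_def faces_def)
  qed
  with sub have "(\<Union>j\<le>length xs. A j) = X" by (auto simp: subcomplex_def)
  moreover have "same_contiguity_class (A j) Y (\<phi> i) (\<phi> l)" if "i \<in> I" "l \<in> I" for i l j
  proof (cases "j < length xs")
    case True
    then have \<sigma>: "xs ! j \<in> X" using xs by auto
    have "same_contiguity_class (faces (xs ! j)) Y (\<phi> i) (\<phi> l)"
      using \<phi> that \<sigma> complex_simplex_finite[OF Xc \<sigma>] complex_simplex_nonempty[OF Xc \<sigma>]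
      by (intro same_contiguity_class_faces Y) (auto simp: simplicial_map_def)
    with True show ?thesis by (simp add: A_def)
  qed (simp add: A_def same_contiguity_class_empty)
  ultimately have "SD_cover X Y I \<phi> (length xs) A"
    using sub by (simp add: SD_cover_def)
  then show ?thesis by blast
qed

lemma SD_cover_comp_left:
  assumes "SD_cover X Y I \<phi> k A" "simplicial_map Y Z \<psi>"
  shows "SD_cover X Z I (\<lambda>i v. \<psi> (\<phi> i v)) k A"
  using assms(1) unfolding SD_cover_def by (auto intro!: same_contiguity_class_comp_left[OF assms(2)])

lemma SD_cover_comp_right:
  assumes X: "is_complex X" and F: "simplicial_map X Y F" and B: "SD_cover Y Z I \<phi> k B"
  shows "SD_cover X Z I (\<lambda>i v. \<phi> i (F v)) k (\<lambda>j. {S \<in> X. F ` S \<in> B j})"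
proof -
  let ?A = "\<lambda>j. {S \<in> X. F ` S \<in> B j}"
  have sub: "subcomplex (?A j) X" if "j \<le> k" for j
  proof -
    have Bj: "is_complex (B j)" using B that by (simp add: SD_cover_def subcomplex_def)
    have "\<tau> \<in> ?A j" if S: "S \<in> ?A j" and \<tau>: "\<tau> \<subseteq> S" "\<tau> \<noteq> {}" for S \<tau>
    proof -
      have "F ` \<tau> \<in> B j"
        using S \<tau> complex_face[OF Bj, of "F ` S" "F ` \<tau>"] by blast
      moreover have "\<tau> \<in> X" using S \<tau> complex_face[OF X, of S \<tau>] by blast
      ultimately show ?thesis by blast
    qed
    moreover have "finite S \<and> S \<noteq> {}" if "S \<in> ?A j" for S
      using that complex_simplex_finite[OF X] complex_simplex_nonempty[OF X] by blast
    ultimately show ?thesis unfolding subcomplex_def is_complex_def by blast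
  qed
  have "F ` S \<in> (\<Union>j\<le>k. B j)" if "S \<in> X" for S
    using that F B by (simp add: SD_cover_def simplicial_map_def)
  then have "(\<Union>j\<le>k. ?A j) = X" by blast
  moreover have "same_contiguity_class (?A j) Z (\<lambda>v. \<phi> i (F v)) (\<lambda>v. \<phi> l (F v))"
    if "i \<in> I" "l \<in> I" "j \<le> k" for i l j
  proof (rule same_contiguity_class_comp_right)
    show "simplicial_map (?A j) (B j) F" by (simp add: simplicial_map_def)
    show "same_contiguity_class (B j) Z (\<phi> i) (\<phi> l)" using B that by (simp add: SD_cover_def)
  qed
  ultimately show ?thesis using sub by (simp add: SD_cover_def)
qed

lemma SD_comp_left_le:
  assumes "SD_cover X Y I \<phi> k A" "simplicial_map Y Z \<psi>"
  shows "SD X Z I (\<lambda>i v. \<psi> (\<phi> i v)) \<le> SD X Y I \<phi>"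
  using SD_cover_SD[OF assms(1)] SD_cover_comp_left[OF _ assms(2)] SD_le by blast

lemma SD_comp_right_le:
  assumes "is_complex X" "simplicial_map X Y F" "SD_cover Y Z I \<phi> k B"
  shows "SD X Z I (\<lambda>i v. \<phi> i (F v)) \<le> SD Y Z I \<phi>"
  using SD_cover_SD[OF assms(3)] SD_cover_comp_right[OF assms(1,2)] SD_le by blast

section \<open>Categorical powers\<close>

lemma cpow_simplex_subset_lists:
  assumes "S \<in> cpow X n"
  shows "S \<subseteq> {xs. set xs \<subseteq> vertices X \<and> length xs = n}"
proof
  fix xs assume xs: "xs \<in> S"
  then have len: "length xs = n" using assms by (simp add: cpow_def)
  have "xs ! i \<in> vertices X" if "i < n" for i
    using assms xs that simplex_subset_vertices[of "(\<lambda>v. v ! i) ` S" X] by (auto simp: cpow_def)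
  with len show "xs \<in> {xs. set xs \<subseteq> vertices X \<and> length xs = n}"
    by (auto simp: in_set_conv_nth)
qed

lemma length_in_vertices_cpow: "v \<in> vertices (cpow X n) \<Longrightarrow> length v = n"
  unfolding vertices_def cpow_def by auto

lemma cpow_face:
  assumes X: "is_complex X" and S: "S \<in> cpow X n" and \<tau>: "\<tau> \<subseteq> S" "\<tau> \<noteq> {}"
  shows "\<tau> \<in> cpow X n"
proof -
  have "(\<lambda>v. v ! i) ` \<tau> \<in> X" if "i < n" for i
  proof (rule complex_face[OF X])
    show "(\<lambda>v. v ! i) ` S \<in> X" using S that by (simp add: cpow_def)
  qed (use \<tau> in auto)
  with S \<tau> show ?thesis by (auto simp: cpow_def)
qed

lemma finite_complex_cpow:
  assumes X: "finite_complex X"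
  shows "finite_complex (cpow X n)"
proof -
  let ?V = "{xs. set xs \<subseteq> vertices X \<and> length xs = n}"
  have V: "finite ?V" using X by (intro finite_lists_length_eq) (simp add: finite_complex_def)
  have "vertices (cpow X n) \<subseteq> ?V"
  proof
    fix xs assume "xs \<in> vertices (cpow X n)"
    then obtain S where "S \<in> cpow X n" "xs \<in> S" by (auto simp: vertices_def)
    then show "xs \<in> ?V" using cpow_simplex_subset_lists by blast
  qed
  moreover have "finite S" "S \<noteq> {}" if "S \<in> cpow X n" for S
    using that V cpow_simplex_subset_lists[OF that] finite_subset by (auto simp: cpow_def)
  ultimately show ?thesis
    using V finite_subset cpow_face[of X _ n] X
    unfolding finite_complex_def is_complex_def by meson
qed

lemma simplicial_map_cpow_nth:
  assumes "simplicial_map X Y \<phi>" "i < n"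
  shows "simplicial_map (cpow X n) Y (\<lambda>v. \<phi> (v ! i))"
proof -
  have "simplicial_map (cpow X n) X (\<lambda>v. v ! i)"
    using assms(2) by (simp add: simplicial_map_def cpow_def)
  then show ?thesis using assms(1) by (rule simplicial_map_comp)
qed

lemma simplicial_map_cpow_map:
  assumes \<phi>: "simplicial_map X Y \<phi>"
  shows "simplicial_map (cpow X n) (cpow Y n) (map \<phi>)"
  unfolding simplicial_map_def
proof
  fix S assume S: "S \<in> cpow X n"
  have "(\<lambda>v. v ! i) ` map \<phi> ` S = \<phi> ` (\<lambda>v. v ! i) ` S" if "i < n" for i
    using S that unfolding image_image by (intro image_cong) (auto simp: cpow_def)
  then show "map \<phi> ` S \<in> cpow Y n"
    using S \<phi> by (auto simp: cpow_def simplicial_map_def)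
qed

lemma TC_cover_exists:
  assumes "finite_complex X" "is_complex Y" "edge_path_connected Y" "simplicial_map X Y \<phi>"
  shows "\<exists>k A. SD_cover (cpow X n) Y {..<n} (\<lambda>i v. \<phi> (v ! i)) k A"
  using assms by (intro SD_cover_exists finite_complex_cpow) (auto intro: simplicial_map_cpow_nth)

lemma TC_comp_le_left:
  assumes "finite_complex L" "is_complex N" "edge_path_connected N"
    and "simplicial_map L N \<phi>" "simplicial_map N K \<psi>"
  shows "TC n L K (\<psi> \<circ> \<phi>) \<le> TC n L N \<phi>"
  using TC_cover_exists[OF assms(1-4)] SD_comp_left_le[OF _ assms(5)]
  unfolding TC_def comp_def by blast

lemma TC_comp_le_right:
  assumes "finite_complex L" "simplicial_map L N \<phi>"
    and "finite_complex N" "is_complex K" "edge_path_connected K" "simplicial_map N K \<psi>"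
  shows "TC n L K (\<psi> \<circ> \<phi>) \<le> TC n N K \<psi>"
proof -
  have "TC n L K (\<psi> \<circ> \<phi>) = SD (cpow L n) K {..<n} (\<lambda>i v. \<psi> (map \<phi> v ! i))"
    unfolding TC_def by (rule SD_cong) (simp add: length_in_vertices_cpow)
  also have "\<dots> \<le> TC n N K \<psi>"
  proof -
    obtain k B where cover: "SD_cover (cpow N n) K {..<n} (\<lambda>i v. \<psi> (v ! i)) k B"
      using TC_cover_exists[OF assms(3-6)] by blast
    have "is_complex (cpow L n)"
      using finite_complex_cpow[OF assms(1)] by (simp add: finite_complex_def)
    from SD_comp_right_le[OF this simplicial_map_cpow_map[OF assms(2)] cover]
    show ?thesis unfolding TC_def .
  qed
  finally show ?thesis .
qed

theorem theorem5p4: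
  fixes L :: "'a set set" and N :: "'b set set" and K :: "'c set set"
    and \<phi> :: "'a \<Rightarrow> 'b" and \<psi> :: "'b \<Rightarrow> 'c" and n :: nat
  assumes "finite_complex L" "edge_path_connected L"
    and "finite_complex N" "edge_path_connected N"
    and "finite_complex K" "edge_path_connected K"
    and "finite_fibration L N \<phi>" "\<phi> ` vertices L = vertices N"
    and "finite_fibration N K \<psi>" "\<psi> ` vertices N = vertices K"
    and "n \<ge> 2"
  shows "TC n L K (\<psi> \<circ> \<phi>) \<le> min (TC n L N \<phi>) (TC n N K \<psi>)"
proof -
  have N: "is_complex N" and K: "is_complex K"
    using assms(3,5) by (simp_all add: finite_complex_def)
  have \<phi>: "simplicial_map L N \<phi>" and \<psi>: "simplicial_map N K \<psi>"
    using assms(7,9) by (simp_all add: finite_fibration_def)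
  show ?thesis
    using TC_comp_le_left[OF assms(1) N assms(4) \<phi> \<psi>]
      TC_comp_le_right[OF assms(1) \<phi> assms(3) K assms(6) \<psi>]
    by simp
qed

end
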